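(* Let $A$ be a commutative ring and let $x_0,x_1,\ldots,x_n$ be a path in $\Gamma(A)$. Fix $X\in\mathrm{GL}_2(A)$ with $x_0=\infty\cdot X$. Then there exist unique $a_1,\ldots,a_n\in A$ satisfying $x_i=\infty\cdot E(a_i)E(a_{i-1})\cdots E(a_1)X$ for $i=1,\ldots,n$. Conversely, given $X\in\mathrm{GL}_2(A)$ and $a_1,\ldots,a_n\in A$, setting $x_0:=\infty\cdot X$ and $x_i:=\infty\cdot E(a_i)\cdots E(a_1)X$ for $1\le i\le n$, the sequence $x_0,x_1,\ldots,x_n$ is a path in $\Gamma(A)$.
   Context: A unimodular row over $A$ is $(a,b)\in A^2$ with $aA+bA=A$. $\Gamma(A)$ is the graph whose vertices are classes $[u]$ of unimodular rows modulo multiplication by units, with $\{[u],[v]\}$ an edge iff the matrix with rows $u,v$ lies in $\mathrm{GL}_2(A)$; a path is a sequence of vertices in which consecutive vertices are adjacent. $\mathrm{GL}_2(A)$ acts on vertices on the right by $[u]\cdot M=[uM]$; $\infty=[(1,0)]$. $E(a)=\begin{pmatrix}a&1\\-1&0\end{pmatrix}$. *)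

theory Defs
  imports Main
begin

text \<open>2x2 matrices over a commutative ring: Mat2 a b c d is the matrix with rows (a,b) and (c,d).\<close>
datatype 'a mat2 = Mat2 'a 'a 'a 'a

fun mmul :: "'a::comm_ring_1 mat2 \<Rightarrow> 'a mat2 \<Rightarrow> 'a mat2" where
  "mmul (Mat2 a b c d) (Mat2 e f g h) =
     Mat2 (a*e + b*g) (a*f + b*h) (c*e + d*g) (c*f + d*h)"

definition mat2_one :: "'a::comm_ring_1 mat2" where
  "mat2_one = Mat2 1 0 0 1"

definition GL2 :: "'a::comm_ring_1 mat2 set" where
  "GL2 = {M. \<exists>N. mmul M N = mat2_one \<and> mmul N M = mat2_one}"

definition rows :: "'a \<times> 'a \<Rightarrow> 'a \<times> 'a \<Rightarrow> 'a mat2" where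
  "rows u v = Mat2 (fst u) (snd u) (fst v) (snd v)"

fun vecmat :: "'a::comm_ring_1 \<times> 'a \<Rightarrow> 'a mat2 \<Rightarrow> 'a \<times> 'a" where
  "vecmat (p, q) (Mat2 a b c d) = (p*a + q*c, p*b + q*d)"

definition unimodular :: "'a::comm_ring_1 \<times> 'a \<Rightarrow> bool" where
  "unimodular u \<longleftrightarrow> (\<exists>c d. fst u * c + snd u * d = 1)"

definition vclass :: "'a::comm_ring_1 \<times> 'a \<Rightarrow> ('a \<times> 'a) set" where
  "vclass u = {(e * fst u, e * snd u) | e. e dvd 1}"

definition vertices :: "('a::comm_ring_1 \<times> 'a) set set" where
  "vertices = {vclass u | u. unimodular u}"

definition adjacent :: "('a::comm_ring_1 \<times> 'a) set \<Rightarrow> ('a \<times> 'a) set \<Rightarrow> bool" where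
  "adjacent x y \<longleftrightarrow> (\<exists>u v. unimodular u \<and> unimodular v \<and>
      x = vclass u \<and> y = vclass v \<and> rows u v \<in> GL2)"

definition is_path :: "(nat \<Rightarrow> ('a::comm_ring_1 \<times> 'a) set) \<Rightarrow> nat \<Rightarrow> bool" where
  "is_path x n \<longleftrightarrow> (\<forall>i\<le>n. x i \<in> vertices) \<and> (\<forall>i<n. adjacent (x i) (x (Suc i)))"

definition vact :: "('a::comm_ring_1 \<times> 'a) set \<Rightarrow> 'a mat2 \<Rightarrow> ('a \<times> 'a) set" where
  "vact x M = (\<lambda>u. vecmat u M) ` x"

definition infty :: "('a::comm_ring_1 \<times> 'a) set" where
  "infty = vclass (1, 0)"

definition E :: "'a::comm_ring_1 \<Rightarrow> 'a mat2" where
  "E a = Mat2 a 1 (-1) 0"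

text \<open>Eprod [a1,...,ai] = E(ai) * ... * E(a1).\<close>
definition Eprod :: "'a::comm_ring_1 list \<Rightarrow> 'a mat2" where
  "Eprod as = foldl (\<lambda>M a. mmul (E a) M) mat2_one as"

end

theory Submission
  imports Defs
begin

text \<open>
  GL2(A) acts on \<Gamma>(A) by graph automorphisms. The neighbours of \<infinity> = [(1,0)] are
  exactly the classes [(a,1)] = \<infinity> \<cdot> E(a), and a is determined by the class;
  transporting by M \<in> GL2(A), the neighbours of \<infinity> \<cdot> M are exactly the vertices
  \<infinity> \<cdot> E(a) M, again with a unique a. Walking along the path produces the a_i one at
  a time; conversely, consecutive vertices \<infinity> \<cdot> M and \<infinity> \<cdot> E(a) M are adjacent.
\<close>

lemma mmul_assoc: "mmul (mmul A B) C = mmul A (mmul B (C::'a::comm_ring_1 mat2))"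
  by (cases A; cases B; cases C) (simp add: algebra_simps)

lemma mmul_one_left [simp]: "mmul mat2_one (A::'a::comm_ring_1 mat2) = A"
  by (cases A) (simp add: mat2_one_def)

fun det2 :: "'a::comm_ring_1 mat2 \<Rightarrow> 'a" where
  "det2 (Mat2 a b c d) = a * d - b * c"

lemma det2_mmul: "det2 (mmul A B) = det2 A * det2 (B::'a::comm_ring_1 mat2)"
  by (cases A; cases B) (simp add: algebra_simps)

lemma GL2_iff_det2_dvd_one: "(M::'a::comm_ring_1 mat2) \<in> GL2 \<longleftrightarrow> det2 M dvd 1"
proof
  assume "M \<in> GL2"
  then obtain N where "mmul M N = mat2_one" unfolding GL2_def by blast
  then have "det2 M * det2 N = det2 (mat2_one :: 'a mat2)" by (metis det2_mmul)
  then have "det2 M * det2 N = 1" by (simp add: mat2_one_def)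
  then show "det2 M dvd 1" by (metis dvd_triv_left)
next
  assume "det2 M dvd 1"
  then obtain k where k: "det2 M * k = 1" by (metis dvd_def)
  obtain a b c d where M: "M = Mat2 a b c d" by (cases M)
  define N where "N = Mat2 (d * k) (- b * k) (- c * k) (a * k)"
  have "mmul M N = mat2_one" "mmul N M = mat2_one"
    using k by (simp_all add: M N_def mat2_one_def algebra_simps)
  then show "M \<in> GL2" unfolding GL2_def by blast
qed

lemma unit_mult: "a dvd 1 \<Longrightarrow> b dvd 1 \<Longrightarrow> a * b dvd (1::'a::comm_semiring_1)"
  using mult_dvd_mono[of a 1 b 1] by simp

lemma GL2_mmul: "A \<in> GL2 \<Longrightarrow> B \<in> GL2 \<Longrightarrow> mmul A (B::'a::comm_ring_1 mat2) \<in> GL2"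
  by (simp add: GL2_iff_det2_dvd_one det2_mmul unit_mult)

lemma GL2_inverse:
  assumes "(M::'a::comm_ring_1 mat2) \<in> GL2"
  obtains N where "N \<in> GL2" "mmul M N = mat2_one" "mmul N M = mat2_one"
  using assms unfolding GL2_def by blast

lemma E_in_GL2: "E a \<in> GL2"
  by (simp add: GL2_iff_det2_dvd_one E_def)

lemma Eprod_Nil [simp]: "Eprod [] = mat2_one"
  by (simp add: Eprod_def)

lemma Eprod_snoc: "Eprod (as @ [a]) = mmul (E a) (Eprod as)"
  by (simp add: Eprod_def)

lemma Eprod_in_GL2: "Eprod as \<in> GL2"
proof (induction as rule: rev_induct)
  case Nil
  then show ?case by (simp add: GL2_iff_det2_dvd_one mat2_one_def)
next
  case (snoc a as)
  then show ?case by (simp add: Eprod_snoc GL2_mmul E_in_GL2)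
qed

lemma vecmat_mmul: "vecmat (vecmat u M) N = vecmat u (mmul M (N::'a::comm_ring_1 mat2))"
  by (cases u; cases M; cases N) (simp add: algebra_simps)

lemma vact_mmul: "vact (vact x M) N = vact x (mmul M (N::'a::comm_ring_1 mat2))"
  by (simp add: vact_def image_image vecmat_mmul)

lemma vact_one [simp]: "vact x (mat2_one::'a::comm_ring_1 mat2) = x"
proof -
  have "vecmat u (mat2_one::'a mat2) = u" for u by (cases u) (simp add: mat2_one_def)
  then show ?thesis by (simp add: vact_def)
qed

lemma vact_inj:
  assumes "(M::'a::comm_ring_1 mat2) \<in> GL2" "vact x M = vact y M"
  shows "x = y"
proof -
  obtain N where "mmul M N = mat2_one" using assms(1) by (rule GL2_inverse)
  then show ?thesis by (metis assms(2) vact_mmul vact_one)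
qed

lemma vact_vclass: "vact (vclass u) M = vclass (vecmat u (M::'a::comm_ring_1 mat2))"
proof -
  have "vecmat (e * fst u, e * snd u) M = (e * fst (vecmat u M), e * snd (vecmat u M))" for e
    by (cases u; cases M) (simp add: algebra_simps)
  moreover have "vclass w = (\<lambda>e. (e * fst w, e * snd w)) ` {e. e dvd 1}" for w :: "'a \<times> 'a"
    by (auto simp: vclass_def)
  ultimately show ?thesis by (simp add: vact_def image_image)
qed

lemma vclass_eqD:
  assumes "vclass u = vclass (v::'a::comm_ring_1 \<times> 'a)"
  shows "\<exists>e. e dvd 1 \<and> v = (e * fst u, e * snd u)"
proof -
  have "v \<in> vclass v" unfolding vclass_def by (rule CollectI, rule exI[of _ 1]) simp
  then show ?thesis using assms unfolding vclass_def by auto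
qed

lemma vclass_mult_unit:
  assumes "(e::'a::comm_ring_1) dvd 1"
  shows "vclass (e * p, e * q) = vclass (p, q)"
proof -
  have sub: "vclass (f * p', f * q') \<subseteq> vclass (p', q')" if "f dvd 1" for f p' q' :: 'a
  proof
    fix w assume "w \<in> vclass (f * p', f * q')"
    then obtain g where g: "g dvd 1" "w = (g * (f * p'), g * (f * q'))"
      unfolding vclass_def by auto
    then have "w = ((g * f) * p', (g * f) * q')" by (simp add: mult.assoc)
    moreover have "g * f dvd 1" using g(1) that by (rule unit_mult)
    ultimately show "w \<in> vclass (p', q')" unfolding vclass_def by auto
  qed
  obtain e' where e': "e * e' = 1" using assms by (metis dvd_def)
  then have "e' dvd 1" by (metis dvd_triv_right)
  moreover have "e' * (e * r) = r" for r
    using e' by (metis mult.assoc mult.commute mult_1)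
  ultimately have "vclass (p, q) \<subseteq> vclass (e * p, e * q)"
    using sub[of e' "e * p" "e * q"] by simp
  with sub[OF assms] show ?thesis by blast
qed

lemma det2_rows: "det2 (rows u v) = fst u * snd v - snd u * fst (v::'a::comm_ring_1 \<times> 'a)"
  by (simp add: rows_def)

lemma rows_vecmat: "rows (vecmat u M) (vecmat v M) = mmul (rows u v) (M::'a::comm_ring_1 mat2)"
  by (cases u; cases v; cases M) (simp add: rows_def)

lemma unimodular_if_rows_in_GL2:
  assumes "rows u (v::'a::comm_ring_1 \<times> 'a) \<in> GL2"
  shows "unimodular u" "unimodular v"
proof -
  obtain k where k: "(fst u * snd v - snd u * fst v) * k = 1"
    using assms by (metis GL2_iff_det2_dvd_one det2_rows dvd_def)
  have "fst u * (snd v * k) + snd u * (- fst v * k) = 1"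
       "fst v * (- snd u * k) + snd v * (fst u * k) = 1"
    using k by (simp_all add: algebra_simps)
  then show "unimodular u" "unimodular v" unfolding unimodular_def by blast+
qed

lemma adjacent_iff_rows_in_GL2:
  "adjacent x y \<longleftrightarrow> (\<exists>u v. x = vclass u \<and> y = vclass v \<and> rows u v \<in> GL2)"
  unfolding adjacent_def using unimodular_if_rows_in_GL2 by blast

lemma adjacent_vact:
  assumes "(M::'a::comm_ring_1 mat2) \<in> GL2" "adjacent x y"
  shows "adjacent (vact x M) (vact y M)"
  using assms GL2_mmul unfolding adjacent_iff_rows_in_GL2
  by (metis rows_vecmat vact_vclass)

lemma adjacent_vact_iff:
  assumes "(M::'a::comm_ring_1 mat2) \<in> GL2"
  shows "adjacent (vact x M) (vact y M) \<longleftrightarrow> adjacent x y"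
proof
  obtain N where "N \<in> GL2" "mmul M N = mat2_one" using assms by (rule GL2_inverse)
  then show "adjacent (vact x M) (vact y M) \<Longrightarrow> adjacent x y"
    by (metis adjacent_vact vact_mmul vact_one)
qed (rule adjacent_vact[OF assms])

lemma vact_infty_in_vertices:
  assumes "(M::'a::comm_ring_1 mat2) \<in> GL2"
  shows "vact infty M \<in> vertices"
proof -
  have "rows (vecmat (1, 0) M) (vecmat (0, 1) M) = M" by (cases M) (simp add: rows_def)
  then have "unimodular (vecmat (1, 0) M)" using assms unimodular_if_rows_in_GL2 by metis
  then show ?thesis unfolding vertices_def infty_def vact_vclass by blast
qed

lemma vact_infty_E: "vact infty (E a) = vclass (a, 1)"
  by (simp add: infty_def vact_vclass E_def)

lemma adjacent_infty_iff: "adjacent infty y \<longleftrightarrow> (\<exists>a::'a::comm_ring_1. y = vact infty (E a))"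
proof
  assume "adjacent infty y"
  then obtain u v where uv: "vclass (1, 0) = vclass u" "y = vclass v" "rows u v \<in> GL2"
    unfolding adjacent_iff_rows_in_GL2 infty_def by blast
  obtain e :: 'a where "e dvd 1" "u = (e, 0)" using vclass_eqD[OF uv(1)] by auto
  then have "e * snd v dvd 1" using uv(3) by (simp add: GL2_iff_det2_dvd_one det2_rows)
  then obtain t where t: "snd v * t = 1" by (metis dvd_def dvd_mult_right)
  then have "snd v dvd 1" by (metis dvd_triv_left)
  moreover have "v = (snd v * (fst v * t), snd v * 1)"
    using t by (cases v) (simp add: mult.left_commute)
  ultimately have "y = vclass (fst v * t, 1)" using uv(2) vclass_mult_unit by metis
  then show "\<exists>a. y = vact infty (E a)" by (auto simp: vact_infty_E)
next
  assume "\<exists>a. y = vact infty (E a)"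
  then obtain a where "y = vclass (a, 1)" by (auto simp: vact_infty_E)
  moreover have "rows (1, 0) (a, 1) \<in> GL2" by (simp add: GL2_iff_det2_dvd_one det2_rows)
  ultimately show "adjacent infty y" unfolding adjacent_iff_rows_in_GL2 infty_def by blast
qed

lemma vact_infty_E_inj: "vact infty (E a) = vact infty (E b) \<Longrightarrow> a = (b::'a::comm_ring_1)"
  by (auto simp: vact_infty_E dest!: vclass_eqD)

lemma adjacent_vact_infty_iff:
  assumes "(M::'a::comm_ring_1 mat2) \<in> GL2"
  shows "adjacent (vact infty M) y \<longleftrightarrow> (\<exists>a. y = vact infty (mmul (E a) M))"
proof -
  obtain N where "mmul N M = mat2_one" using assms by (rule GL2_inverse)
  then have y: "y = vact (vact y N) M" by (simp add: vact_mmul)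
  have "adjacent (vact infty M) y \<longleftrightarrow> adjacent infty (vact y N)"
    using adjacent_vact_iff[OF assms] y by metis
  also have "\<dots> \<longleftrightarrow> (\<exists>a. vact y N = vact infty (E a))" by (rule adjacent_infty_iff)
  also have "\<dots> \<longleftrightarrow> (\<exists>a. y = vact infty (mmul (E a) M))"
    using vact_inj[OF assms] y by (metis vact_mmul)
  finally show ?thesis .
qed

lemma vact_infty_E_mmul_inj:
  assumes "(M::'a::comm_ring_1 mat2) \<in> GL2"
    and "vact infty (mmul (E a) M) = vact infty (mmul (E b) M)"
  shows "a = b"
  using assms by (metis vact_inj vact_mmul vact_infty_E_inj)

definition E_path :: "'a::comm_ring_1 mat2 \<Rightarrow> 'a list \<Rightarrow> nat \<Rightarrow> ('a \<times> 'a) set" where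
  "E_path X as i = vact infty (mmul (Eprod (take i as)) X)"

lemma E_path_0 [simp]: "E_path X as 0 = vact infty X"
  by (simp add: E_path_def)

lemma E_path_append: "i \<le> length as \<Longrightarrow> E_path X (as @ bs) i = E_path X as i"
  by (simp add: E_path_def)

lemma E_path_Suc:
  "i < length as \<Longrightarrow>
     E_path X as (Suc i) = vact infty (mmul (E (as ! i)) (mmul (Eprod (take i as)) X))"
  by (simp add: E_path_def take_Suc_conv_app_nth Eprod_snoc mmul_assoc)

lemma is_path_E_path:
  assumes "(X::'a::comm_ring_1 mat2) \<in> GL2"
  shows "is_path (E_path X as) (length as)"
  unfolding is_path_def
proof (intro conjI allI impI)
  have M: "mmul (Eprod (take i as)) X \<in> GL2" for i
    using assms by (simp add: GL2_mmul Eprod_in_GL2)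
  show "E_path X as i \<in> vertices" for i
    using vact_infty_in_vertices[OF M] by (simp add: E_path_def)
  show "adjacent (E_path X as i) (E_path X as (Suc i))" if "i < length as" for i
    unfolding E_path_Suc[OF that] using adjacent_vact_infty_iff[OF M] by (auto simp: E_path_def)
qed

lemma is_path_imp_E_path:
  assumes "is_path x n" "(X::'a::comm_ring_1 mat2) \<in> GL2" "x 0 = vact infty X"
  shows "\<exists>as. length as = n \<and> (\<forall>i\<le>n. x i = E_path X as i)"
  using assms(1)
proof (induction n)
  case 0
  then show ?case using assms(3) by simp
next
  case (Suc n)
  then obtain as where as: "length as = n" "\<forall>i\<le>n. x i = E_path X as i"
    unfolding is_path_def by auto
  define M where "M = mmul (Eprod as) X"
  have "M \<in> GL2" unfolding M_def using assms(2) by (simp add: GL2_mmul Eprod_in_GL2)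
  moreover have "adjacent (vact infty M) (x (Suc n))"
    using Suc.prems as by (auto simp: is_path_def M_def E_path_def)
  ultimately obtain a where a: "x (Suc n) = vact infty (mmul (E a) M)"
    using adjacent_vact_infty_iff by blast
  have "x i = E_path X (as @ [a]) i" if "i \<le> Suc n" for i
  proof (cases "i = Suc n")
    case True
    have "E_path X (as @ [a]) (Suc (length as)) = vact infty (mmul (E a) M)"
      using E_path_Suc[of "length as" "as @ [a]" X] by (simp add: M_def)
    then show ?thesis using a True as(1) by simp
  next
    case False
    then show ?thesis using that as by (simp add: E_path_append)
  qed
  then show ?case using as by (intro exI[of _ "as @ [a]"]) simp
qed

lemma E_path_inj:
  assumes "(X::'a::comm_ring_1 mat2) \<in> GL2" "length bs = length as"
    and "\<forall>i\<in>{1..length as}. E_path X as i = E_path X bs i"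
  shows "as = bs"
  using assms(2,3)
proof (induction as arbitrary: bs rule: rev_induct)
  case Nil
  then show ?case by simp
next
  case (snoc a as)
  then obtain bs' b where bs: "bs = bs' @ [b]" "length bs' = length as"
    by (cases bs rule: rev_cases) auto
  have "\<forall>i\<in>{1..length as}. E_path X as i = E_path X bs' i"
  proof
    fix i assume "i \<in> {1..length as}"
    then have "E_path X (as @ [a]) i = E_path X (bs' @ [b]) i" "i \<le> length as"
      using snoc.prems(2) bs by auto
    then show "E_path X as i = E_path X bs' i" using bs(2) by (simp add: E_path_append)
  qed
  with bs(2) have "as = bs'" by (rule snoc.IH)
  moreover have "a = b"
  proof (rule vact_infty_E_mmul_inj)
    show "mmul (Eprod as) X \<in> GL2" using assms(1) by (simp add: GL2_mmul Eprod_in_GL2)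
    have "E_path X (as @ [a]) (Suc (length as)) = E_path X (bs' @ [b]) (Suc (length as))"
      using snoc.prems(2) bs by simp
    then show "vact infty (mmul (E a) (mmul (Eprod as) X)) = vact infty (mmul (E b) (mmul (Eprod as) X))"
      using \<open>as = bs'\<close> by (simp add: E_path_Suc)
  qed
  ultimately show ?case using bs by simp
qed

theorem lemma3p1:
  fixes x :: "nat \<Rightarrow> ('a::comm_ring_1 \<times> 'a) set" and n :: nat and X :: "'a mat2"
  shows "(is_path x n \<and> X \<in> GL2 \<and> x 0 = vact infty X \<longrightarrow>
           (\<exists>!as :: 'a list. length as = n \<and>
              (\<forall>i\<in>{1..n}. x i = vact infty (mmul (Eprod (take i as)) X))))
       \<and> (\<forall>as :: 'a list. X \<in> GL2 \<and> length as = n \<longrightarrow>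
           is_path (\<lambda>i. if i = 0 then vact infty X
                        else vact infty (mmul (Eprod (take i as)) X)) n)"
proof (intro conjI impI allI)
  assume path: "is_path x n \<and> X \<in> GL2 \<and> x 0 = vact infty X"
  then obtain as where as: "length as = n" "\<forall>i\<le>n. x i = E_path X as i"
    using is_path_imp_E_path by blast
  show "\<exists>!as. length as = n \<and> (\<forall>i\<in>{1..n}. x i = vact infty (mmul (Eprod (take i as)) X))"
  proof (rule ex1I[of _ as])
    fix bs
    assume "length bs = n \<and> (\<forall>i\<in>{1..n}. x i = vact infty (mmul (Eprod (take i bs)) X))"
    then show "bs = as"
      using path as E_path_inj[of X as bs] by (auto simp: E_path_def)
  qed (use as in \<open>auto simp: E_path_def\<close>)
next
  fix as :: "'a list"
  assume "X \<in> GL2 \<and> length as = n"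
  moreover have "(\<lambda>i. if i = 0 then vact infty X else vact infty (mmul (Eprod (take i as)) X))
      = E_path X as"
    by (rule ext) (simp add: E_path_def)
  ultimately show "is_path (\<lambda>i. if i = 0 then vact infty X
                        else vact infty (mmul (Eprod (take i as)) X)) n"
    using is_path_E_path by metis
qed

end
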